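(* Let $k\ge 1$ and $n$ be integers with $2k\le n\le 2k+2$ (equivalently, $\mathrm{SG}(n,k)$ is $t$-chromatic with $t=n-2k+2\le 4$). Then $\mathrm{SG}(n,k)$ admits an orientation in which every shortest odd cycle of $\mathrm{SG}(n,k)$ is alternating (vacuously if it has no odd cycle).
   Context: The Kneser graph $\mathrm{KG}(n,k)$ ($n\ge 2k$) has as vertices all $k$-element subsets of $[n]=\{1,\dots,n\}$, two being adjacent iff disjoint. The Schrijver graph $\mathrm{SG}(n,k)$ is the induced subgraph of $\mathrm{KG}(n,k)$ on the stable $k$-subsets, i.e., those $A$ containing no pair $\{i,i+1\}$ for $i\in[n-1]$ and not containing both $1$ and $n$; its chromatic number is $n-2k+2$. An orientation assigns each edge exactly one direction. In an oriented graph, a subgraph that is a cycle is called alternating if at most one of its vertices has both positive in-degree and positive out-degree within that cycle. *)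

theory Defs
  imports Main
begin

definition stable_subset :: "nat \<Rightarrow> nat set \<Rightarrow> bool" where
  "stable_subset n A \<longleftrightarrow>
     (\<forall>i. 1 \<le> i \<and> i < n \<longrightarrow> \<not> (i \<in> A \<and> Suc i \<in> A)) \<and> \<not> (1 \<in> A \<and> n \<in> A)"

definition SG_vertices :: "nat \<Rightarrow> nat \<Rightarrow> nat set set" where
  "SG_vertices n k = {A. A \<subseteq> {1..n} \<and> card A = k \<and> stable_subset n A}"

definition SG_adj :: "nat \<Rightarrow> nat \<Rightarrow> nat set \<Rightarrow> nat set \<Rightarrow> bool" where
  "SG_adj n k A B \<longleftrightarrow> A \<in> SG_vertices n k \<and> B \<in> SG_vertices n k \<and> A \<inter> B = {}"

definition is_cycle :: "('a \<Rightarrow> 'a \<Rightarrow> bool) \<Rightarrow> 'a list \<Rightarrow> bool" where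
  "is_cycle E cs \<longleftrightarrow> 3 \<le> length cs \<and> distinct cs \<and>
     (\<forall>i < length cs. E (cs ! i) (cs ! ((i + 1) mod length cs)))"

definition shortest_odd_cycle :: "('a \<Rightarrow> 'a \<Rightarrow> bool) \<Rightarrow> 'a list \<Rightarrow> bool" where
  "shortest_odd_cycle E cs \<longleftrightarrow> is_cycle E cs \<and> odd (length cs) \<and>
     (\<forall>cs'. is_cycle E cs' \<and> odd (length cs') \<longrightarrow> length cs \<le> length cs')"

definition is_orientation :: "('a \<Rightarrow> 'a \<Rightarrow> bool) \<Rightarrow> ('a \<Rightarrow> 'a \<Rightarrow> bool) \<Rightarrow> bool" where
  "is_orientation E D \<longleftrightarrow> (\<forall>x y. D x y \<longrightarrow> E x y) \<and>
     (\<forall>x y. E x y \<longrightarrow> D x y \<or> D y x) \<and> (\<forall>x y. D x y \<longrightarrow> \<not> D y x)"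

definition cycle_in_out :: "('a \<Rightarrow> 'a \<Rightarrow> bool) \<Rightarrow> 'a list \<Rightarrow> nat \<Rightarrow> bool" where
  "cycle_in_out D cs i \<longleftrightarrow>
     (let m = length cs; v = cs ! i; p = cs ! ((i + m - 1) mod m); s = cs ! ((i + 1) mod m)
      in (D p v \<or> D s v) \<and> (D v p \<or> D v s))"

definition alternating :: "('a \<Rightarrow> 'a \<Rightarrow> bool) \<Rightarrow> 'a list \<Rightarrow> bool" where
  "alternating D cs \<longleftrightarrow> card {i. i < length cs \<and> cycle_in_out D cs i} \<le> 1"

end

theory Submission
  imports Defs
begin

(*
  Orient SG(n,k) from lower to higher rank, where a vertex has rank 0, 1 or 2 according as it
  contains 1, else 3, else 2, and rank 3 otherwise. The first three rank classes are
  independent; inside rank 3, arcs go from the smaller to the larger minimum.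

  Let C be a shortest odd cycle, of length L, and for x in [n] let m(x) count the edges of C
  both of whose ends miss x. Adjacent vertices are disjoint, so m(x) has the parity of L and is
  odd, and double counting gives m(1) + ... + m(n) = L (n - 2k). Rotating suitable stable sets
  gives odd closed walks short enough to force L (n - 2k) <= n + 2, so m(x) = 1 for all x but
  at most one. The vertices of C with both an in- and an out-arc on C are odd in number, and
  the ranks let us charge them injectively to edges missing 1, and also to edges missing 2
  or 3. As m(1) = 1 or m(2) = m(3) = 1, there is exactly one such vertex.
*)

lemma card_less_eq_sum_of_bool:
  fixes n :: nat
  shows "card {i. i < n \<and> P i} = (\<Sum>i<n. of_bool (P i))"
  by (simp add: Collect_conj_eq lessThan_def Int_commute)

lemma odd_sum_le_card_plus_2:
  fixes f :: "'a \<Rightarrow> nat"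
  assumes "finite U" and odd: "\<And>z. z \<in> U \<Longrightarrow> odd (f z)" and sum: "sum f U \<le> card U + 2"
    and "x \<in> U" and "y \<in> U" and "x \<noteq> y"
  shows "f x = 1 \<or> f y = 1"
proof -
  let ?R = "U - {x, y}"
  have "card ?R = (\<Sum>z\<in>?R. 1)"
    by simp
  also have "\<dots> \<le> sum f ?R"
    using odd by (intro sum_mono) (auto simp: Suc_le_eq odd_pos)
  finally have "card ?R \<le> sum f ?R" .
  moreover have "sum f U = f x + f y + sum f ?R"
  proof -
    have "sum f U = f x + sum f (U - {x})"
      using assms(1,4) by (rule sum.remove)
    also have "sum f (U - {x}) = f y + sum f (U - {x} - {y})"
      using assms(1,5,6) by (intro sum.remove) auto
    finally show ?thesis
      by (simp add: Diff_insert2 [symmetric] insert_commute)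
  qed
  moreover have "card U = card ?R + 2"
  proof -
    have "{x, y} \<subseteq> U"
      using assms(4,5) by simp
    then have "card {x, y} \<le> card U" and "card ?R = card U - card {x, y}"
      using assms(1) by (simp_all add: card_mono card_Diff_subset)
    then show ?thesis
      using assms(6) by simp
  qed
  ultimately have "f x + f y \<le> 4"
    using sum by linarith
  then show ?thesis
    using odd[OF \<open>x \<in> U\<close>] odd[OF \<open>y \<in> U\<close>] by presburger
qed

locale graph_cycle =
  fixes E :: "'a \<Rightarrow> 'a \<Rightarrow> bool" and cs :: "'a list"
  assumes cycle: "is_cycle E cs"
begin

definition nxt :: "nat \<Rightarrow> nat" where
  "nxt i = (i + 1) mod length cs"

definition prv :: "nat \<Rightarrow> nat" where
  "prv i = (i + length cs - 1) mod length cs"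

lemma length_ge_3: "3 \<le> length cs"
  using cycle by (simp add: is_cycle_def)

lemma cs_nonempty [simp]: "cs \<noteq> []"
  using length_ge_3 by auto

lemma nxt_less [simp]: "nxt i < length cs"
  by (simp add: nxt_def)

lemma prv_less [simp]: "prv i < length cs"
  by (simp add: prv_def)

lemma nxt_prv [simp]: "i < length cs \<Longrightarrow> nxt (prv i) = i"
  using length_ge_3 by (cases i) (auto simp: nxt_def prv_def mod_Suc)

lemma prv_nxt [simp]: "i < length cs \<Longrightarrow> prv (nxt i) = i"
  using length_ge_3 by (auto simp: nxt_def prv_def mod_Suc)

lemma nxt_neq: "i < length cs \<Longrightarrow> nxt i \<noteq> i"
  using length_ge_3 by (auto simp: nxt_def mod_Suc)

lemma nxt_nxt_neq: "i < length cs \<Longrightarrow> nxt (nxt i) \<noteq> i"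
  using length_ge_3 by (auto simp: nxt_def mod_Suc)

lemma adj_nxt: "i < length cs \<Longrightarrow> E (cs ! i) (cs ! nxt i)"
  using cycle by (simp add: is_cycle_def nxt_def)

lemma adj_prv: "i < length cs \<Longrightarrow> E (cs ! prv i) (cs ! i)"
  using adj_nxt[of "prv i"] by simp

lemma bij_betw_nxt: "bij_betw nxt {..<length cs} {..<length cs}"
  by (rule bij_betw_byWitness[where f' = prv]) auto

lemma sum_nxt: "(\<Sum>i<length cs. f (nxt i)) = (\<Sum>i<length cs. f i)"
  using sum.reindex_bij_betw[OF bij_betw_nxt] .

lemma bij_betw_prv: "bij_betw prv {..<length cs} {..<length cs}"
  by (rule bij_betw_byWitness[where f' = nxt]) auto

lemma sum_prv: "(\<Sum>i<length cs. f (prv i)) = (\<Sum>i<length cs. f i)"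
  using sum.reindex_bij_betw[OF bij_betw_prv] .

lemma even_card_changes:
  fixes \<sigma> :: "nat \<Rightarrow> bool"
  shows "even (card {i. i < length cs \<and> \<sigma> (prv i) \<noteq> \<sigma> i})"
proof -
  let ?b = "\<lambda>P. of_bool P :: nat"
  let ?changes = "\<Sum>i<length cs. ?b (\<sigma> (prv i) \<noteq> \<sigma> i)"
  have "?changes + 2 * (\<Sum>i<length cs. ?b (\<sigma> (prv i) \<and> \<sigma> i))
      = (\<Sum>i<length cs. ?b (\<sigma> (prv i) \<noteq> \<sigma> i) + 2 * ?b (\<sigma> (prv i) \<and> \<sigma> i))"
    by (simp only: sum.distrib sum_distrib_left)
  also have "\<dots> = (\<Sum>i<length cs. ?b (\<sigma> (prv i)) + ?b (\<sigma> i))"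
    by (rule sum.cong) auto
  also have "\<dots> = (\<Sum>i<length cs. ?b (\<sigma> (prv i))) + (\<Sum>i<length cs. ?b (\<sigma> i))"
    by (rule sum.distrib)
  also have "\<dots> = 2 * (\<Sum>i<length cs. ?b (\<sigma> i))"
    unfolding sum_prv[of "\<lambda>i. ?b (\<sigma> i)"] by (rule mult_2 [symmetric])
  finally have "even (?changes + 2 * (\<Sum>i<length cs. ?b (\<sigma> (prv i) \<and> \<sigma> i)))"
    by (simp only: even_mult_iff even_numeral simp_thms)
  then show ?thesis
    by (simp add: card_less_eq_sum_of_bool)
qed

definition edges_within :: "('a \<Rightarrow> bool) \<Rightarrow> nat set set" where
  "edges_within P = (\<lambda>i. {i, nxt i}) ` {i. i < length cs \<and> P (cs ! i) \<and> P (cs ! nxt i)}"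

lemma finite_edges_within [simp]: "finite (edges_within P)"
  by (simp add: edges_within_def)

lemma card_edges_within:
  "card (edges_within P) = card {i. i < length cs \<and> P (cs ! i) \<and> P (cs ! nxt i)}"
  unfolding edges_within_def
proof (rule card_image, rule inj_onI)
  fix i j
  assume "i \<in> {i. i < length cs \<and> P (cs ! i) \<and> P (cs ! nxt i)}"
    and "j \<in> {i. i < length cs \<and> P (cs ! i) \<and> P (cs ! nxt i)}"
    and "{i, nxt i} = {j, nxt j}"
  then show "i = j"
    using nxt_neq nxt_nxt_neq by (auto simp: doubleton_eq_iff)
qed

lemma neighbour_edge_in_edges_within:
  assumes "i < length cs" and "t = nxt i \<or> t = prv i" and "P (cs ! i)" and "P (cs ! t)"
  shows "{i, t} \<in> edges_within P"
  using assms(2)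
proof
  assume "t = nxt i"
  then show ?thesis
    using assms unfolding edges_within_def by blast
next
  assume "t = prv i"
  then have "{i, t} = {t, nxt t}" and "P (cs ! nxt t)"
    using assms by auto
  then show ?thesis
    using assms(4) prv_less[of i] \<open>t = prv i\<close> unfolding edges_within_def by blast
qed

end

lemma orientation_converse:
  assumes "is_orientation E D" and "E x y"
  shows "D y x \<longleftrightarrow> \<not> D x y"
  using assms unfolding is_orientation_def by blast

lemma inj_on_doubleton:
  assumes "\<And>i. i \<in> S \<Longrightarrow> R i (f i)" and "\<And>i j. R i j \<Longrightarrow> \<not> R j i"
  shows "inj_on (\<lambda>i. {i, f i}) S"
proof (rule inj_onI)
  fix i j assume "i \<in> S" "j \<in> S" and "{i, f i} = {j, f j}"
  then show "i = j"
    using assms by (metis doubleton_eq_iff)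
qed

locale oriented_cycle = graph_cycle E cs for E :: "'a \<Rightarrow> 'a \<Rightarrow> bool" and cs +
  fixes D :: "'a \<Rightarrow> 'a \<Rightarrow> bool"
  assumes orientation: "is_orientation E D"
begin

definition fwd :: "nat \<Rightarrow> bool" where
  "fwd i \<longleftrightarrow> D (cs ! i) (cs ! nxt i)"

definition in_out :: "nat set" where
  "in_out = {i. i < length cs \<and> cycle_in_out D cs i}"

definition out_nb :: "nat \<Rightarrow> nat" where
  "out_nb i = (if fwd i then nxt i else prv i)"

definition in_nb :: "nat \<Rightarrow> nat" where
  "in_nb i = (if fwd i then prv i else nxt i)"

lemma in_out_subset: "in_out \<subseteq> {..<length cs}"
  by (auto simp: in_out_def)

lemma finite_in_out [simp]: "finite in_out"
  using in_out_subset by (rule finite_subset) simp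

lemma arc_prv_iff: "i < length cs \<Longrightarrow> D (cs ! prv i) (cs ! i) \<longleftrightarrow> fwd (prv i)"
  by (simp add: fwd_def)

lemma arc_to_prv_iff: "i < length cs \<Longrightarrow> D (cs ! i) (cs ! prv i) \<longleftrightarrow> \<not> fwd (prv i)"
  using orientation_converse[OF orientation adj_prv] by (simp add: fwd_def)

lemma arc_from_nxt_iff: "i < length cs \<Longrightarrow> D (cs ! nxt i) (cs ! i) \<longleftrightarrow> \<not> fwd i"
  using orientation_converse[OF orientation adj_nxt] by (simp add: fwd_def)

lemma in_out_iff: "i < length cs \<Longrightarrow> i \<in> in_out \<longleftrightarrow> (fwd (prv i) \<longleftrightarrow> fwd i)"
  unfolding in_out_def cycle_in_out_def Let_def prv_def [symmetric] nxt_def [symmetric]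
  using arc_prv_iff arc_to_prv_iff arc_from_nxt_iff by (auto simp: fwd_def)

theorem odd_card_in_out:
  assumes "odd (length cs)"
  shows "odd (card in_out)"
proof -
  let ?changes = "{i. i < length cs \<and> fwd (prv i) \<noteq> fwd i}"
  have "in_out \<union> ?changes = {..<length cs}" and "in_out \<inter> ?changes = {}"
    using in_out_iff in_out_subset by auto
  then have "odd (card in_out + card ?changes)"
    using card_Un_disjoint[of in_out ?changes] assms by simp
  then show ?thesis
    using even_card_changes[of fwd] by simp
qed

lemma in_out_arcs:
  assumes "i \<in> in_out"
  shows "D (cs ! in_nb i) (cs ! i)" and "D (cs ! i) (cs ! out_nb i)"
proof -
  have i: "i < length cs" and same: "fwd (prv i) \<longleftrightarrow> fwd i"
    using assms in_out_iff in_out_subset by auto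
  show "D (cs ! in_nb i) (cs ! i)"
    using arc_prv_iff[OF i] arc_from_nxt_iff[OF i] same by (simp add: in_nb_def)
  show "D (cs ! i) (cs ! out_nb i)"
    using arc_to_prv_iff[OF i] same by (simp add: out_nb_def fwd_def)
qed

lemma out_nb_cases: "out_nb i = nxt i \<or> out_nb i = prv i"
  by (simp add: out_nb_def)

lemma in_nb_cases: "in_nb i = nxt i \<or> in_nb i = prv i"
  by (simp add: in_nb_def)

lemma in_nb_less [simp]: "in_nb i < length cs"
  by (simp add: in_nb_def)

lemma out_nb_less [simp]: "out_nb i < length cs"
  by (simp add: out_nb_def)

lemma in_out_less: "i \<in> in_out \<Longrightarrow> i < length cs"
  using in_out_subset by auto

lemma inj_on_out_edges: "inj_on (\<lambda>i. {i, out_nb i}) in_out"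
  by (rule inj_on_doubleton[where R = "\<lambda>i j. D (cs ! i) (cs ! j)"])
    (use in_out_arcs orientation in \<open>auto simp: is_orientation_def\<close>)

lemma inj_on_in_edges: "inj_on (\<lambda>i. {i, in_nb i}) in_out"
  by (rule inj_on_doubleton[where R = "\<lambda>i j. D (cs ! j) (cs ! i)"])
    (use in_out_arcs orientation in \<open>auto simp: is_orientation_def\<close>)

end

locale kneser_cycle = graph_cycle E cs for E :: "'b set \<Rightarrow> 'b set \<Rightarrow> bool" and cs +
  assumes adj_disjoint: "E A B \<Longrightarrow> A \<inter> B = {}"
begin

abbreviation edges_avoiding :: "'b \<Rightarrow> nat set set" where
  "edges_avoiding x \<equiv> edges_within (\<lambda>A. x \<notin> A)"

lemma card_edges_avoiding:
  "2 * card {i. i < length cs \<and> x \<in> cs ! i} + card (edges_avoiding x) = length cs"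
proof -
  let ?b = "\<lambda>P. of_bool P :: nat"
  have "(\<Sum>i<length cs. ?b (x \<in> cs ! i) + ?b (x \<in> cs ! nxt i)
          + ?b (x \<notin> cs ! i \<and> x \<notin> cs ! nxt i)) = (\<Sum>i<length cs. 1)"
    using adj_disjoint[OF adj_nxt] by (intro sum.cong) auto
  then have "(\<Sum>i<length cs. ?b (x \<in> cs ! i)) + (\<Sum>i<length cs. ?b (x \<in> cs ! nxt i))
      + (\<Sum>i<length cs. ?b (x \<notin> cs ! i \<and> x \<notin> cs ! nxt i)) = length cs"
    by (simp only: sum.distrib) simp
  then show ?thesis
    unfolding sum_nxt[of "\<lambda>i. ?b (x \<in> cs ! i)"] card_edges_within card_less_eq_sum_of_bool
    by simp
qed

lemma odd_card_edges_avoiding: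
  assumes "odd (length cs)"
  shows "odd (card (edges_avoiding x))"
proof -
  have "odd (2 * card {i. i < length cs \<and> x \<in> cs ! i} + card (edges_avoiding x))"
    using assms card_edges_avoiding by simp
  then show ?thesis
    by simp
qed

lemma sum_card_edges_avoiding:
  assumes "finite U" and "\<And>A. A \<in> set cs \<Longrightarrow> A \<subseteq> U \<and> card A = k"
  shows "(\<Sum>x\<in>U. card (edges_avoiding x)) + 2 * k * length cs = card U * length cs"
proof -
  let ?b = "\<lambda>P. of_bool P :: nat"
  have "(\<Sum>x\<in>U. card {i. i < length cs \<and> x \<in> cs ! i})
      = (\<Sum>x\<in>U. \<Sum>i<length cs. ?b (x \<in> cs ! i))"
    by (simp only: card_less_eq_sum_of_bool)
  also have "\<dots> = (\<Sum>i<length cs. \<Sum>x\<in>U. ?b (x \<in> cs ! i))"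
    by (rule sum.swap)
  also have "\<dots> = (\<Sum>i<length cs. k)"
  proof (rule sum.cong)
    fix i assume "i \<in> {..<length cs}"
    then have "cs ! i \<subseteq> U" and "card (cs ! i) = k"
      using assms(2) by auto
    then show "(\<Sum>x\<in>U. ?b (x \<in> cs ! i)) = k"
      using assms(1) by (simp add: Int_absorb1)
  qed simp
  finally have "(\<Sum>x\<in>U. 2 * card {i. i < length cs \<and> x \<in> cs ! i}) = 2 * k * length cs"
    by (simp add: sum_distrib_left [symmetric])
  moreover have "(\<Sum>x\<in>U. 2 * card {i. i < length cs \<and> x \<in> cs ! i} + card (edges_avoiding x))
      = card U * length cs"
    by (simp only: card_edges_avoiding) simp
  ultimately show ?thesis
    by (simp add: sum.distrib)
qed

end

definition closed_walk :: "('a \<Rightarrow> 'a \<Rightarrow> bool) \<Rightarrow> nat \<Rightarrow> (nat \<Rightarrow> 'a) \<Rightarrow> bool" where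
  "closed_walk E N w \<longleftrightarrow> 0 < N \<and> (\<forall>i<N. E (w i) (w ((i + 1) mod N)))"

lemma closed_walk_step:
  assumes "closed_walk E N w"
  shows "E (w (i mod N)) (w ((i + 1) mod N))"
proof -
  have "E (w (i mod N)) (w ((i mod N + 1) mod N))"
    using assms by (simp add: closed_walk_def)
  then show ?thesis
    by (simp add: mod_Suc_eq)
qed

lemma is_cycle_map_closed_walk:
  assumes "closed_walk E N w" and "inj_on w {..<N}" and "3 \<le> N"
  shows "is_cycle E (map w [0..<N])"
  using assms by (auto simp: is_cycle_def closed_walk_def distinct_map atLeast0LessThan)

lemma closed_walk_segment:
  assumes walk: "closed_walk E N w" and "p < q" and "q < N" and "w p = w q"
  shows "closed_walk E (q - p) (\<lambda>i. w (p + i))"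
  unfolding closed_walk_def
proof (intro conjI allI impI)
  fix i assume i: "i < q - p"
  have step: "E (w (p + i)) (w (p + i + 1))"
    using closed_walk_step[OF walk, of "p + i"] i \<open>q < N\<close> by simp
  show "E (w (p + i)) (w (p + (i + 1) mod (q - p)))"
  proof (cases "i + 1 < q - p")
    case True
    then show ?thesis using step by simp
  next
    case False
    then have "i + 1 = q - p"
      using i by simp
    then have "p + i + 1 = q" and "(i + 1) mod (q - p) = 0"
      by auto
    then show ?thesis using step \<open>w p = w q\<close> by simp
  qed
qed (use \<open>p < q\<close> in simp)

lemma closed_walk_complement:
  assumes walk: "closed_walk E N w" and "p < q" and "q < N" and "w p = w q"
  shows "closed_walk E (N - (q - p)) (\<lambda>i. w ((q + i) mod N))"
  unfolding closed_walk_def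
proof (intro conjI allI impI)
  fix i assume i: "i < N - (q - p)"
  have step: "E (w ((q + i) mod N)) (w ((q + i + 1) mod N))"
    using closed_walk_step[OF walk, of "q + i"] by simp
  show "E (w ((q + i) mod N)) (w ((q + (i + 1) mod (N - (q - p))) mod N))"
  proof (cases "i + 1 < N - (q - p)")
    case True
    then show ?thesis using step by simp
  next
    case False
    then have "i + 1 = N - (q - p)"
      using i by simp
    then have "q + i + 1 = N + p" and "(i + 1) mod (N - (q - p)) = 0"
      using \<open>p < q\<close> \<open>q < N\<close> by auto
    then show ?thesis using step \<open>w p = w q\<close> \<open>p < q\<close> \<open>q < N\<close> by simp
  qed
qed (use \<open>q < N\<close> in simp)

theorem closed_odd_walk_imp_odd_cycle:
  assumes irrefl: "\<And>v. \<not> E v v" and "closed_walk E N w" and "odd N"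
  shows "\<exists>cs. is_cycle E cs \<and> odd (length cs) \<and> length cs \<le> N"
  using assms(2,3)
proof (induction N arbitrary: w rule: less_induct)
  case (less N)
  show ?case
  proof (cases "inj_on w {..<N}")
    case True
    have "N \<noteq> 1"
      using less.prems(1) irrefl by (auto simp: closed_walk_def)
    then have "3 \<le> N"
      using less.prems(2) by presburger
    then show ?thesis
      using is_cycle_map_closed_walk[OF less.prems(1) True] less.prems(2) by fastforce
  next
    case False
    then obtain p q where "p < q" "q < N" "w p = w q"
      unfolding inj_on_def by (metis lessThan_iff linorder_neqE_nat)
    note segment = closed_walk_segment[OF less.prems(1) this]
      and complement = closed_walk_complement[OF less.prems(1) this]
    show ?thesis
    proof (cases "odd (q - p)")
      case True
      then show ?thesis
        using less.IH[OF _ segment] \<open>q < N\<close> by fastforce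
    next
      case False
      then have "odd (N - (q - p))"
        using less.prems(2) \<open>p < q\<close> \<open>q < N\<close> by simp
      then show ?thesis
        using less.IH[OF _ complement] \<open>p < q\<close> by fastforce
    qed
  qed
qed

definition rot :: "nat \<Rightarrow> nat \<Rightarrow> nat \<Rightarrow> nat" where
  "rot n s x = (x + s - 1) mod n + 1"

lemma rot_rot: "1 \<le> x \<Longrightarrow> rot n s (rot n t x) = rot n (s + t) x"
  by (cases x) (simp_all add: rot_def mod_add_right_eq ac_simps)

lemma rot_mem: "0 < n \<Longrightarrow> rot n s x \<in> {1..n}"
  by (simp add: rot_def Suc_le_eq)

lemma rot_mult: "x \<in> {1..n} \<Longrightarrow> rot n (n * m) x = x"
  by (cases x) (simp_all add: rot_def)

lemma rot_eq:
  "x \<in> {1..n} \<Longrightarrow> s \<le> n \<Longrightarrow> rot n s x = (if x + s \<le> n then x + s else x + s - n)"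
  by (auto simp: rot_def le_mod_geq)

lemma inj_on_rot: "inj_on (rot n s) {1..n}"
proof (rule inj_on_inverseI)
  fix x assume "x \<in> {1..n}"
  then show "rot n (n * s - s) (rot n s x) = x"
    using rot_rot[of x n "n * s - s" s] rot_mult[of x n s] by simp
qed

lemma rot_0: "x \<in> {1..n} \<Longrightarrow> rot n 0 x = x"
  using rot_mult[of x n 0] by simp

lemma rot_1: "x \<in> {1..n} \<Longrightarrow> rot n 1 x = (if x = n then 1 else x + 1)"
  by (auto simp: rot_eq)

lemma image_rot_rot: "A \<subseteq> {1..n} \<Longrightarrow> rot n s ` rot n t ` A = rot n (s + t) ` A"
  unfolding image_image by (rule image_cong) (auto simp: rot_rot)

lemma stable_subset_iff_rot:
  assumes A: "A \<subseteq> {1..n}"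
  shows "stable_subset n A \<longleftrightarrow> (\<forall>x\<in>A. rot n 1 x \<notin> A)"
proof
  assume stable: "stable_subset n A"
  show "\<forall>x\<in>A. rot n 1 x \<notin> A"
  proof
    fix x assume "x \<in> A"
    with A have x: "x \<in> {1..n}" by blast
    show "rot n 1 x \<notin> A"
    proof (cases "x = n")
      case True
      then show ?thesis
        using stable \<open>x \<in> A\<close> rot_1[OF x] by (simp add: stable_subset_def)
    next
      case False
      then show ?thesis
        using stable \<open>x \<in> A\<close> x rot_1[OF x] by (simp add: stable_subset_def)
    qed
  qed
next
  assume rot_out: "\<forall>x\<in>A. rot n 1 x \<notin> A"
  show "stable_subset n A"
    unfolding stable_subset_def
  proof (intro conjI allI impI notI)
    fix i assume "1 \<le> i \<and> i < n" and "i \<in> A \<and> Suc i \<in> A"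
    then show False
      using rot_out rot_1[of i n] by auto
  next
    assume "1 \<in> A \<and> n \<in> A"
    moreover from this have "rot n 1 n = 1"
      using A rot_1[of n n] by auto
    ultimately show False
      using rot_out by metis
  qed
qed

lemma stable_subset_not_consecutive:
  assumes "stable_subset n A" and "A \<subseteq> {1..n}" and "1 \<le> i" and "i \<in> A"
  shows "i + 1 \<notin> A"
proof
  assume "i + 1 \<in> A"
  then have "i < n"
    using assms(2) by auto
  then show False
    using assms(1,3,4) \<open>i + 1 \<in> A\<close> unfolding stable_subset_def by auto
qed

lemma rot_SG_vertex:
  assumes "A \<in> SG_vertices n k"
  shows "rot n s ` A \<in> SG_vertices n k"
proof -
  have A: "A \<subseteq> {1..n}" and "card A = k" and stable: "stable_subset n A"
    using assms by (auto simp: SG_vertices_def)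
  have inj: "inj_on (rot n s) A"
    using inj_on_rot A by (rule inj_on_subset)
  have rot_in: "rot n t x \<in> {1..n}" if "x \<in> A" for t x
    using that A by (intro rot_mem) auto
  have "rot n 1 y \<notin> rot n s ` A" if "y \<in> rot n s ` A" for y
  proof
    obtain x where x: "x \<in> A" and y: "y = rot n s x"
      using \<open>y \<in> rot n s ` A\<close> by blast
    assume "rot n 1 y \<in> rot n s ` A"
    then obtain z where z: "z \<in> A" and "rot n 1 y = rot n s z"
      by blast
    moreover have "rot n 1 y = rot n s (rot n 1 x)"
      using x A y rot_rot[of x n 1 s] rot_rot[of x n s 1] by (simp add: add.commute subset_iff)
    ultimately have "rot n 1 x = z"
      using inj_onD[OF inj_on_rot[of n s] _ rot_in[OF x]] z A by auto
    then show False
      using stable x z stable_subset_iff_rot[OF A] by blast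
  qed
  moreover have sub: "rot n s ` A \<subseteq> {1..n}"
    using rot_in by blast
  ultimately have "stable_subset n (rot n s ` A)"
    using stable_subset_iff_rot[OF sub] by blast
  then show ?thesis
    using sub card_image[OF inj] \<open>card A = k\<close> by (simp add: SG_vertices_def)
qed

lemma SG_adj_rot:
  assumes "A \<in> SG_vertices n k"
  shows "SG_adj n k A (rot n 1 ` A)"
proof -
  have "A \<inter> rot n 1 ` A = {}"
    using assms stable_subset_iff_rot[of A n] by (auto simp: SG_vertices_def)
  then show ?thesis
    using assms rot_SG_vertex by (simp add: SG_adj_def)
qed

lemma SG_adj_irrefl: "1 \<le> k \<Longrightarrow> \<not> SG_adj n k A A"
  by (auto simp: SG_adj_def SG_vertices_def)

lemma SG_odd_cycle_from_rotations:
  assumes A: "A \<in> SG_vertices n k" and "1 \<le> k" and "odd N"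
    and disjoint: "A \<inter> rot n (N - 1) ` A = {}"
  shows "\<exists>cs. is_cycle (SG_adj n k) cs \<and> odd (length cs) \<and> length cs \<le> N"
proof -
  have sub: "A \<subseteq> {1..n}"
    using A by (simp add: SG_vertices_def)
  have "closed_walk (SG_adj n k) N (\<lambda>i. rot n i ` A)"
    unfolding closed_walk_def
  proof (intro conjI allI impI)
    fix i assume "i < N"
    show "SG_adj n k (rot n i ` A) (rot n ((i + 1) mod N) ` A)"
    proof (cases "i + 1 < N")
      case True
      then show ?thesis
        using SG_adj_rot[OF rot_SG_vertex[OF A, of i]] image_rot_rot[OF sub, of 1 i] by simp
    next
      case False
      then have "i + 1 = N"
        using \<open>i < N\<close> by simp
      then have "i = N - 1" and "(i + 1) mod N = 0"
        by auto
      moreover have "rot n 0 ` A = (\<lambda>x. x) ` A"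
        using sub rot_0 by (intro image_cong) auto
      ultimately show ?thesis
        using disjoint A rot_SG_vertex[OF A] by (auto simp: SG_adj_def)
    qed
  qed (use \<open>odd N\<close> in presburger)
  then show ?thesis
    using closed_odd_walk_imp_odd_cycle SG_adj_irrefl \<open>1 \<le> k\<close> \<open>odd N\<close> by metis
qed

(* For n = 2j + 1 (with q = 0) and for n = 2j + 2q + 2 (with q \<le> j \<le> q + 1), the rotations of
   this set by 0, ..., 2j form a closed walk of odd length 2j + 1 in SG(n, j + q). *)
definition alt_set :: "nat \<Rightarrow> nat \<Rightarrow> nat set" where
  "alt_set j q = (\<lambda>t. 2 * t + 1) ` {..<j} \<union> (\<lambda>t. 2 * j + 2 * t + 2) ` {..<q}"

lemma mem_alt_set:
  "x \<in> alt_set j q \<longleftrightarrow> 1 \<le> x \<and> x \<le> 2 * j + 2 * q \<and> (odd x \<longleftrightarrow> x \<le> 2 * j)"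
proof
  assume "x \<in> alt_set j q"
  then show "1 \<le> x \<and> x \<le> 2 * j + 2 * q \<and> (odd x \<longleftrightarrow> x \<le> 2 * j)"
    unfolding alt_set_def by auto
next
  assume x: "1 \<le> x \<and> x \<le> 2 * j + 2 * q \<and> (odd x \<longleftrightarrow> x \<le> 2 * j)"
  show "x \<in> alt_set j q"
  proof (cases "odd x")
    case True
    then have "x = 2 * (x div 2) + 1" and "x div 2 < j"
      using x by presburger+
    then show ?thesis
      unfolding alt_set_def by blast
  next
    case False
    then have "x = 2 * j + 2 * ((x - 2 * j - 2) div 2) + 2" and "(x - 2 * j - 2) div 2 < q"
      using x by presburger+
    then show ?thesis
      unfolding alt_set_def by blast
  qed
qed

lemma card_alt_set: "card (alt_set j q) = j + q"
proof -
  have "(\<lambda>t. 2 * t + 1) ` {..<j} \<inter> (\<lambda>t. 2 * j + 2 * t + 2) ` {..<q} = {}"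
    by auto
  moreover have "inj_on (\<lambda>t. 2 * t + 1) {..<j}" and "inj_on (\<lambda>t. 2 * j + 2 * t + 2) {..<q}"
    by (auto intro: inj_onI)
  ultimately show ?thesis
    unfolding alt_set_def by (simp add: card_Un_disjoint card_image)
qed

lemma alt_set_SG_vertex:
  assumes "2 * j + 2 * q < n"
  shows "alt_set j q \<in> SG_vertices n (j + q)"
proof -
  have "alt_set j q \<subseteq> {1..n}"
    using assms by (auto simp: mem_alt_set)
  moreover have "stable_subset n (alt_set j q)"
    using assms unfolding stable_subset_def mem_alt_set by presburger
  ultimately show ?thesis
    by (simp add: SG_vertices_def card_alt_set)
qed

lemma rot_alt_set_odd:
  assumes "x \<in> alt_set j 0"
  shows "rot (2 * j + 1) (2 * j) x \<notin> alt_set j 0"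
proof -
  have x: "1 \<le> x" "x \<le> 2 * j" "odd x"
    using assms by (auto simp: mem_alt_set)
  show ?thesis
  proof (cases "x = 1")
    case True
    then have "rot (2 * j + 1) (2 * j) x = 2 * j + 1"
      by (simp add: rot_eq)
    then show ?thesis
      by (simp add: mem_alt_set)
  next
    case False
    then have "rot (2 * j + 1) (2 * j) x = x - 1"
      using x by (simp add: rot_eq)
    then show ?thesis
      using x False unfolding mem_alt_set by presburger
  qed
qed

lemma rot_alt_set_even:
  assumes "x \<in> alt_set j q" and "q \<le> j" and "j \<le> q + 1"
  shows "rot (2 * j + 2 * q + 2) (2 * j) x \<notin> alt_set j q"
proof -
  let ?n = "2 * j + 2 * q + 2"
  have x: "1 \<le> x" "x \<le> 2 * j + 2 * q" "odd x \<longleftrightarrow> x \<le> 2 * j"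
    using assms(1) by (auto simp: mem_alt_set)
  show ?thesis
  proof (cases "x + 2 * j \<le> ?n")
    case True
    then have "rot ?n (2 * j) x = x + 2 * j"
      using x by (simp add: rot_eq)
    then show ?thesis
      using x True assms(2,3) unfolding mem_alt_set by presburger
  next
    case False
    then have "rot ?n (2 * j) x = x + 2 * j - ?n"
      using x by (simp add: rot_eq)
    then show ?thesis
      using x False assms(2,3) unfolding mem_alt_set by presburger
  qed
qed

lemma SG_short_odd_cycle:
  assumes "1 \<le> k" and "2 * k < n" and "n \<le> 2 * k + 2"
  shows "\<exists>cs. is_cycle (SG_adj n k) cs \<and> odd (length cs) \<and> length cs * (n - 2 * k) \<le> n + 2"
proof -
  obtain j q where k: "k = j + q" and "2 * j + 2 * q < n"
    and rot_notin: "\<And>x. x \<in> alt_set j q \<Longrightarrow> rot n (2 * j) x \<notin> alt_set j q"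
    and bound: "(2 * j + 1) * (n - 2 * k) \<le> n + 2"
  proof (cases "n = 2 * k + 1")
    case True
    then show ?thesis
      using that[of k 0] rot_alt_set_odd by simp
  next
    case False
    then have n: "n = 2 * k + 2"
      using assms by simp
    obtain j q where "k = j + q" and "q \<le> j" and "j \<le> q + 1"
      by (rule that[of "k - k div 2" "k div 2"]) presburger+
    moreover from this have "n = 2 * j + 2 * q + 2" and "n - 2 * k = 2"
      using n by simp_all
    ultimately show ?thesis
      using that[of j q] rot_alt_set_even[of _ j q] by simp
  qed
  have "alt_set j q \<in> SG_vertices n k"
    using alt_set_SG_vertex[OF \<open>2 * j + 2 * q < n\<close>] k by simp
  moreover have "alt_set j q \<inter> rot n (2 * j + 1 - 1) ` alt_set j q = {}"
    using rot_notin by auto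
  ultimately obtain cs where "is_cycle (SG_adj n k) cs" "odd (length cs)" "length cs \<le> 2 * j + 1"
    using SG_odd_cycle_from_rotations[of "alt_set j q" n k "2 * j + 1"] assms(1) by auto
  moreover from this have "length cs * (n - 2 * k) \<le> n + 2"
    using bound by (meson le_trans mult_le_mono1)
  ultimately show ?thesis
    by blast
qed

definition rank :: "nat set \<Rightarrow> nat" where
  "rank A = (if 1 \<in> A then 0 else if 3 \<in> A then 1 else if 2 \<in> A then 2 else 3)"

lemma rank_le_3: "rank A \<le> 3"
  by (simp add: rank_def)

lemma rank_0_iff: "rank A = 0 \<longleftrightarrow> 1 \<in> A"
  by (simp add: rank_def)

lemma rank_1_iff: "rank A = 1 \<longleftrightarrow> 1 \<notin> A \<and> 3 \<in> A"
  by (simp add: rank_def)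

lemma rank_2_iff: "rank A = 2 \<longleftrightarrow> 1 \<notin> A \<and> 3 \<notin> A \<and> 2 \<in> A"
  by (simp add: rank_def)

lemma rank_3_iff: "rank A = 3 \<longleftrightarrow> 1 \<notin> A \<and> 3 \<notin> A \<and> 2 \<notin> A"
  by (simp add: rank_def)

lemma rank_eq_imp_3:
  assumes "A \<inter> B = {}" and "rank A = rank B"
  shows "rank A = 3"
proof -
  have "1 \<notin> A \<or> 1 \<notin> B" "3 \<notin> A \<or> 3 \<notin> B" "2 \<notin> A \<or> 2 \<notin> B"
    using assms(1) by auto
  then show ?thesis
    using assms(2) unfolding rank_def by (simp split: if_splits)
qed

definition rank_orientation :: "nat \<Rightarrow> nat \<Rightarrow> nat set \<Rightarrow> nat set \<Rightarrow> bool" where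
  "rank_orientation n k A B \<longleftrightarrow>
     SG_adj n k A B \<and> (rank A < rank B \<or> rank A = rank B \<and> Min A < Min B)"

lemma rank_orientation_is_orientation:
  assumes "1 \<le> k"
  shows "is_orientation (SG_adj n k) (rank_orientation n k)"
  unfolding is_orientation_def
proof (intro conjI allI impI)
  fix A B assume adj: "SG_adj n k A B"
  then have "A \<noteq> {}" "B \<noteq> {}" "finite A" "finite B" "A \<inter> B = {}"
    using assms by (auto simp: SG_adj_def SG_vertices_def intro: finite_subset)
  then have "Min A \<noteq> Min B"
    by (metis Min_in disjoint_iff)
  moreover have "SG_adj n k B A"
    using adj by (auto simp: SG_adj_def)
  ultimately show "rank_orientation n k A B \<or> rank_orientation n k B A"
    using adj by (auto simp: rank_orientation_def)
qed (auto simp: rank_orientation_def)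

lemma rank_orientation_rank:
  "rank_orientation n k A B \<Longrightarrow> rank A < rank B \<or> rank A = 3 \<and> rank B = 3"
  using rank_eq_imp_3 by (fastforce simp: rank_orientation_def SG_adj_def)

lemma rank_orientation_head: "rank_orientation n k X Y \<Longrightarrow> 1 \<notin> Y"
  using rank_orientation_rank[of n k X Y] rank_0_iff[of Y] by linarith

lemma rank_orientation_into_rank_1: "rank_orientation n k X Y \<Longrightarrow> rank Y = 1 \<Longrightarrow> 1 \<in> X"
  using rank_orientation_rank[of n k X Y] rank_0_iff[of X] by linarith

lemma rank_orientation_from_rank_ge_2:
  "rank_orientation n k Y Z \<Longrightarrow> 2 \<le> rank Y \<Longrightarrow> rank Z = 3"
  using rank_orientation_rank[of n k Y Z] rank_le_3[of Y] rank_le_3[of Z] by linarith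

locale SG_cycle =
  fixes n k :: nat and cs :: "nat set list"
  assumes k_pos: "1 \<le> k" and SG_cycle: "is_cycle (SG_adj n k) cs"

sublocale SG_cycle \<subseteq> kneser_cycle "SG_adj n k" cs
  by unfold_locales (use SG_cycle in \<open>auto simp: SG_adj_def\<close>)

sublocale SG_cycle \<subseteq> oriented_cycle "SG_adj n k" cs "rank_orientation n k"
  by unfold_locales (use k_pos in \<open>rule rank_orientation_is_orientation\<close>)

context SG_cycle
begin

lemma vertex: "i < length cs \<Longrightarrow> cs ! i \<in> SG_vertices n k"
  using adj_nxt by (simp add: SG_adj_def)

lemma vertex_subset: "i < length cs \<Longrightarrow> cs ! i \<subseteq> {1..n}"
  using vertex by (simp add: SG_vertices_def)

lemma two_notin_if_one_in: "i < length cs \<Longrightarrow> 1 \<in> cs ! i \<Longrightarrow> 2 \<notin> cs ! i"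
  using stable_subset_not_consecutive[of n "cs ! i" 1] vertex vertex_subset
  by (simp add: SG_vertices_def numeral_2_eq_2)

lemma two_notin_if_three_in: "i < length cs \<Longrightarrow> 3 \<in> cs ! i \<Longrightarrow> 2 \<notin> cs ! i"
  using stable_subset_not_consecutive[of n "cs ! i" 2] vertex vertex_subset
  by (auto simp: SG_vertices_def)

lemma sum_edges_avoiding:
  "(\<Sum>x\<in>{1..n}. card (edges_avoiding x)) + 2 * k * length cs = n * length cs"
proof -
  have "A \<subseteq> {1..n} \<and> card A = k" if "A \<in> set cs" for A
    using that vertex by (auto simp: SG_vertices_def in_set_conv_nth)
  then show ?thesis
    using sum_card_edges_avoiding[of "{1..n}" k] by simp
qed

lemma in_out_rank_pos: "i \<in> in_out \<Longrightarrow> rank (cs ! i) \<noteq> 0"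
  using in_out_arcs(1) rank_orientation_head rank_0_iff by blast

lemma out_edge_avoiding:
  assumes "i \<in> in_out" and "x \<notin> cs ! i" and "x \<notin> cs ! out_nb i"
  shows "{i, out_nb i} \<in> edges_avoiding x"
  using assms in_out_less out_nb_cases by (intro neighbour_edge_in_edges_within) auto

lemma out_edge_avoiding_1: "i \<in> in_out \<Longrightarrow> {i, out_nb i} \<in> edges_avoiding 1"
  using in_out_arcs rank_orientation_head by (intro out_edge_avoiding) blast+

lemma out_edge_avoiding_rank_ge_2:
  assumes "i \<in> in_out" and "2 \<le> rank (cs ! i)" and "x \<in> {2, 3}" and "x \<notin> cs ! i"
  shows "{i, out_nb i} \<in> edges_avoiding x"
proof -
  have "rank (cs ! out_nb i) = 3"
    using rank_orientation_from_rank_ge_2[OF in_out_arcs(2)] assms(1,2) .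
  then show ?thesis
    using assms(1,3,4) rank_3_iff by (intro out_edge_avoiding) auto
qed

lemma in_edge_avoiding_2_rank_1:
  assumes "i \<in> in_out" and "rank (cs ! i) = 1"
  shows "{i, in_nb i} \<in> edges_avoiding 2"
proof -
  have "2 \<notin> cs ! i" and "2 \<notin> cs ! in_nb i"
    using assms in_out_less rank_1_iff two_notin_if_three_in two_notin_if_one_in
      rank_orientation_into_rank_1[OF in_out_arcs(1)] by auto
  then show ?thesis
    using assms(1) in_out_less in_nb_cases by (intro neighbour_edge_in_edges_within) auto
qed

lemma in_edge_neq_out_edge:
  assumes "i \<in> in_out" "rank (cs ! i) = 1" and "j \<in> in_out" "rank (cs ! j) = 3"
  shows "{i, in_nb i} \<noteq> {j, out_nb j}"
proof
  assume "{i, in_nb i} = {j, out_nb j}"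
  then have "i = j \<or> i = out_nb j"
    by (auto simp: doubleton_eq_iff)
  moreover have "rank (cs ! out_nb j) = 3"
    using rank_orientation_from_rank_ge_2[OF in_out_arcs(2)] assms(3,4) by simp
  ultimately show False
    using assms(2,4) by auto
qed

lemma card_in_out_le_avoiding_1: "card in_out \<le> card (edges_avoiding 1)"
  by (rule card_inj_on_le[OF inj_on_out_edges]) (use out_edge_avoiding_1 in auto)

lemma card_in_out_le_avoiding_2_3:
  "card in_out \<le> card (edges_avoiding 2) + card (edges_avoiding 3)"
proof -
  define S where "S r = {i \<in> in_out. rank (cs ! i) = r}" for r
  (* Rank 1 vertices are charged to their in-edge, whose tail has rank 0; the others to their
     out-edge, whose head has rank 3. *)
  let ?in_edges = "(\<lambda>i. {i, in_nb i}) ` S 1" and ?out_edges = "(\<lambda>i. {i, out_nb i}) ` S 3"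
  have S_sub: "S r \<subseteq> in_out" for r
    by (auto simp: S_def)
  have rank_3_notin: "rank A = 3 \<Longrightarrow> 2 \<notin> A"
    and rank_2_notin: "rank A = 2 \<Longrightarrow> 3 \<notin> A" for A
    by (simp_all add: rank_2_iff rank_3_iff)
  have "rank (cs ! i) \<in> {1, 2, 3}" if "i \<in> in_out" for i
    using in_out_rank_pos[OF that] rank_le_3[of "cs ! i"] by auto
  then have "in_out = (S 1 \<union> S 3) \<union> S 2"
    by (auto simp: S_def)
  then have "card in_out \<le> card (S 1) + card (S 3) + card (S 2)"
    using card_Un_le[of "S 1 \<union> S 3" "S 2"] card_Un_le[of "S 1" "S 3"] by simp
  moreover have "card (S 1) + card (S 3) = card (?in_edges \<union> ?out_edges)"
    using in_edge_neq_out_edge inj_on_subset[OF inj_on_in_edges S_sub]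
      inj_on_subset[OF inj_on_out_edges S_sub] finite_subset[OF S_sub]
    by (subst card_Un_disjoint) (auto simp: S_def card_image)
  moreover have "card (?in_edges \<union> ?out_edges) \<le> card (edges_avoiding 2)"
    using in_edge_avoiding_2_rank_1 out_edge_avoiding_rank_ge_2 rank_3_notin
    by (intro card_mono) (auto simp: S_def)
  moreover have "card (S 2) \<le> card (edges_avoiding 3)"
    by (rule card_inj_on_le[OF inj_on_subset[OF inj_on_out_edges S_sub]])
      (use out_edge_avoiding_rank_ge_2 rank_2_notin in \<open>auto simp: S_def\<close>)
  ultimately show ?thesis
    by linarith
qed

lemma shortest_odd_cycle_sum_edges_avoiding:
  assumes shortest: "shortest_odd_cycle (SG_adj n k) cs" and "2 * k \<le> n" and "n \<le> 2 * k + 2"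
  shows "2 * k < n" and "(\<Sum>x\<in>{1..n}. card (edges_avoiding x)) \<le> card {1..n} + 2"
proof -
  have odd_len: "odd (length cs)"
    using shortest by (simp add: shortest_odd_cycle_def)
  have sum_eq: "(\<Sum>x\<in>{1..n}. card (edges_avoiding x)) = length cs * (n - 2 * k)"
    using sum_edges_avoiding \<open>2 * k \<le> n\<close> by (simp add: diff_mult_distrib2 algebra_simps)
  show "2 * k < n"
  proof (rule ccontr)
    assume "\<not> 2 * k < n"
    then have "card (edges_avoiding 1) = 0"
      using sum_eq k_pos \<open>2 * k \<le> n\<close> by simp
    then show False
      using odd_card_edges_avoiding[OF odd_len, of 1] by simp
  qed
  then obtain cs' where "is_cycle (SG_adj n k) cs'" "odd (length cs')"
    and "length cs' * (n - 2 * k) \<le> n + 2"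
    using SG_short_odd_cycle k_pos \<open>n \<le> 2 * k + 2\<close> by blast
  then show "(\<Sum>x\<in>{1..n}. card (edges_avoiding x)) \<le> card {1..n} + 2"
    using shortest sum_eq unfolding shortest_odd_cycle_def
    by (metis card_atLeastAtMost diff_Suc_1 le_trans mult_le_mono1)
qed

theorem shortest_odd_cycle_alternating:
  assumes shortest: "shortest_odd_cycle (SG_adj n k) cs" and "2 * k \<le> n" and "n \<le> 2 * k + 2"
  shows "alternating (rank_orientation n k) cs"
proof -
  have odd_len: "odd (length cs)"
    using shortest by (simp add: shortest_odd_cycle_def)
  note bounds = shortest_odd_cycle_sum_edges_avoiding[OF assms]
  have one: "card (edges_avoiding x) = 1 \<or> card (edges_avoiding y) = 1"
    if "x \<in> {1..n}" "y \<in> {1..n}" "x \<noteq> y" for x y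
    using odd_sum_le_card_plus_2[OF _ odd_card_edges_avoiding[OF odd_len] bounds(2)] that by simp
  have "card in_out \<le> 1"
  proof (cases "card (edges_avoiding 1) = 1")
    case True
    then show ?thesis
      using card_in_out_le_avoiding_1 by simp
  next
    case False
    then have "card (edges_avoiding 2) = 1" and "card (edges_avoiding 3) = 1"
      using one[of 1 2] one[of 1 3] bounds(1) k_pos by auto
    then have "card in_out \<le> 2"
      using card_in_out_le_avoiding_2_3 by simp
    then show ?thesis
      using odd_card_in_out[OF odd_len] by (cases "card in_out = 2") auto
  qed
  then show ?thesis
    by (simp add: alternating_def in_out_def)
qed

end

theorem mainTheorem15:
  fixes n k :: nat
  assumes "1 \<le> k" and "2 * k \<le> n" and "n \<le> 2 * k + 2"
  shows "\<exists>D. is_orientation (SG_adj n k) D \<and>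
           (\<forall>cs. shortest_odd_cycle (SG_adj n k) cs \<longrightarrow> alternating D cs)"
proof (intro exI conjI allI impI)
  show "is_orientation (SG_adj n k) (rank_orientation n k)"
    using assms(1) by (rule rank_orientation_is_orientation)
  fix cs assume shortest: "shortest_odd_cycle (SG_adj n k) cs"
  interpret SG_cycle n k cs
    using assms(1) shortest by unfold_locales (auto simp: shortest_odd_cycle_def)
  show "alternating (rank_orientation n k) cs"
    using shortest assms(2,3) by (rule shortest_odd_cycle_alternating)
qed

end
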